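(* Let $\lambda$ be an infinite cardinal with $\lambda=\lambda^{<\lambda}$. Then $\mathfrak{b}_\lambda\le\mathfrak{b}^7_\lambda$. In other words: if $\mathcal{B},\mathcal{C}\subseteq[\lambda]^\lambda$, $|\mathcal{C}|\le\lambda$, $|\mathcal{B}|<\mathfrak{b}_\lambda$, and $|B\cap C|<\lambda$ for all $B\in\mathcal{B}$, $C\in\mathcal{C}$, then $\mathcal{B}$ and $\mathcal{C}$ are separable.
   Context: For sets $A,B$, $A\subseteq^* B$ means $|A\setminus B|<\lambda$. For families $\mathcal{B},\mathcal{C}$ of subsets of $\lambda$, write $\mathcal{B}\perp\mathcal{C}$ if $|B\cap C|<\lambda$ for all $B\in\mathcal{B}$, $C\in\mathcal{C}$. A set $S$ separates $\mathcal{B}$ and $\mathcal{C}$ if $B\subseteq^* S$ for every $B\in\mathcal{B}$ and $|C\cap S|<\lambda$ for every $C\in\mathcal{C}$; they are separable if such $S$ exists. $\mathfrak{b}^7_\lambda$ is the least cardinality of a family $\mathcal{B}\subseteq[\lambda]^\lambda$ for which there exists $\mathcal{C}\subseteq[\lambda]^\lambda$ with $|\mathcal{C}|=\lambda$, $\mathcal{B}\perp\mathcal{C}$, and $\mathcal{B},\mathcal{C}$ not separable. For $f,g\in{}^\lambda\lambda$, $f\le^* g$ means $|\{\alpha<\lambda: f(\alpha)>g(\alpha)\}|<\lambda$; $B\subseteq{}^\lambda\lambda$ is unbounded if no $h\in{}^\lambda\lambda$ satisfies $f\le^*h$ for all $f\in B$; $\mathfrak{b}_\lambda$ is the least cardinality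 of an unbounded family. *)

theory Defs
  imports Main
begin

unbundle cardinal_syntax

text \<open>The cardinal lambda is represented by a cardinal order r (a well-order that is
  minimal among well-orders of its field); lambda is identified with Field r, whose
  elements are ordered by r (the ordinals below lambda).\<close>

text \<open>lambda^{<lambda}: the set of all functions from some alpha < lambda into lambda,
  where alpha is the initial segment underS r a below a point a of lambda.\<close>
definition funs_below :: "'a rel \<Rightarrow> ('a \<Rightarrow> 'a) set" where
  "funs_below r = (\<Union>a\<in>Field r. Func (underS r a) (Field r))"

definition full_subsets :: "'a rel \<Rightarrow> 'a set set" where
  "full_subsets r = {X. X \<subseteq> Field r \<and> |X| =o r}"

definition separates :: "'a rel \<Rightarrow> 'a set \<Rightarrow> 'a set set \<Rightarrow> 'a set set \<Rightarrow> bool" where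
  "separates r S Bs Cs \<longleftrightarrow> (\<forall>B\<in>Bs. |B - S| <o r) \<and> (\<forall>C\<in>Cs. |C \<inter> S| <o r)"

definition separable :: "'a rel \<Rightarrow> 'a set set \<Rightarrow> 'a set set \<Rightarrow> bool" where
  "separable r Bs Cs \<longleftrightarrow> (\<exists>S. S \<subseteq> Field r \<and> separates r S Bs Cs)"

definition le_star :: "'a rel \<Rightarrow> ('a \<Rightarrow> 'a) \<Rightarrow> ('a \<Rightarrow> 'a) \<Rightarrow> bool" where
  "le_star r f g \<longleftrightarrow> |{x \<in> Field r. (g x, f x) \<in> r \<and> g x \<noteq> f x}| <o r"

definition unbounded :: "'a rel \<Rightarrow> ('a \<Rightarrow> 'a) set \<Rightarrow> bool" where
  "unbounded r F \<longleftrightarrow> F \<subseteq> Func (Field r) (Field r) \<and>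
     \<not> (\<exists>h \<in> Func (Field r) (Field r). \<forall>f\<in>F. le_star r f h)"

end

theory Submission imports Defs begin

(* The cardinal lambda is a cardinal order r with field Field r.
   1. Koenig-type diagonalisation: if lambda^{<lambda} = lambda, no subset of lambda of
      size < lambda is cofinal; hence lambda is regular and therefore stable (unions of
      fewer than lambda sets of size < lambda have size < lambda), and every set of size
      < lambda is bounded strictly below some point of lambda.
   2. Enumerate Cs as (c a) for a in lambda.  For B in Bs each B \<inter> c a is small, so it
      lies below some f_B(a) < lambda.  Since |Bs| < b_lambda, the family of the f_B is
      bounded by a single h modulo sets of size < lambda.
   3. S = lambda minus the union of the sets c a - h(a) separates: each C = c a meets S
      only below h(a), and B - S is covered by the sets B \<inter> c a with h(a) < f_B(a),
      fewer than lambda small sets, so by stability it is small. *)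

lemma (in wo_rel) under_if_not_underS:
  assumes "a \<in> Field r" and "b \<in> Field r" and "b \<notin> underS a"
  shows "(a, b) \<in> r"
  using assms in_notinI[of b a] unfolding underS_def by blast

lemma (in wo_rel) underS_under_trans:
  assumes "(x, y) \<in> r" and "y \<in> underS z"
  shows "x \<in> underS z"
  using assms TRANS ANTISYM unfolding underS_def trans_def antisym_def by blast

lemma image_of_Field_if_card_le:
  assumes r: "Card_order r" and "A \<noteq> {}" and "|A| \<le>o r"
  shows "\<exists>g. g ` Field r = A"
proof -
  have "|A| \<le>o |Field r|"
    using ordLeq_ordIso_trans[OF assms(3) ordIso_symmetric[OF card_of_Field_ordIso[OF r]]] .
  thus ?thesis using card_of_ordLeq2[OF assms(2)] by blast
qed

lemma small_embeds_in_initial_segment: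
  assumes r: "Card_order r" and K: "|K| <o r"
  shows "\<exists>a\<in>Field r. \<exists>j. inj_on j K \<and> j ` K \<subseteq> underS r a"
proof -
  have "Well_order r" using r card_order_on_well_order_on by blast
  then obtain a where a: "a \<in> Field r" and iso: "|K| =o Restr r (underS r a)"
    using ordLess_iff_ordIso_Restr[OF _ card_of_Well_order] K by blast
  then obtain j where "bij_betw j K (Field (Restr r (underS r a)))"
    unfolding ordIso_def iso_def by (auto simp: Field_card_of)
  hence "inj_on j K" "j ` K \<subseteq> underS r a"
    using Field_Restr_subset unfolding bij_betw_def by fastforce+
  thus ?thesis using a by blast
qed

section \<open>Consequences of lambda^{<lambda} = lambda\<close>

text \<open>Enumerate the functions from a small initial
  segment as (e y) for y in lambda and diagonalise against all of them at once.\<close>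
lemma small_not_cofinal:
  assumes r: "Card_order r" and ne: "Field r \<noteq> {}" and fb: "|funs_below r| \<le>o r"
    and K: "K \<subseteq> Field r" "|K| <o r"
  shows "\<not> cofinal K r"
proof
  assume cof: "cofinal K r"
  obtain a j where a: "a \<in> Field r" and j: "inj_on j K" "j ` K \<subseteq> underS r a"
    using small_embeds_in_initial_segment[OF r K(2)] by blast
  let ?FF = "Func (underS r a) (Field r)"
  have "?FF \<subseteq> funs_below r" using a unfolding funs_below_def by blast
  hence "|?FF| \<le>o r" using ordLeq_transitive[OF card_of_mono1 fb] by blast
  then obtain e where e: "e ` Field r = ?FF"
    using image_of_Field_if_card_le[OF r Func_non_emp[OF ne]] by blast
  text \<open>At k, the values e y (j k) for y strictly below k are fewer than lambda.\<close>
  define D where "D k = (\<lambda>y. e y (j k)) ` underS r k" for k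
  have escape: "\<exists>x. x \<in> Field r \<and> x \<notin> D k" if k: "k \<in> Field r" for k
  proof (rule ccontr)
    assume "\<not> ?thesis"
    hence "|Field r| \<le>o |D k|" by (simp add: card_of_mono1 subset_iff)
    moreover have "|D k| \<le>o |underS r k|" unfolding D_def by (rule card_of_image)
    ultimately have "|Field r| <o r"
      using card_of_underS[OF r k] ordLeq_ordLess_trans by metis
    thus False using not_ordLess_ordIso card_of_Field_ordIso[OF r] by metis
  qed
  define g where "g k = (SOME x. x \<in> Field r \<and> x \<notin> D k)" for k
  have g: "g k \<in> Field r" "g k \<notin> D k" if "k \<in> Field r" for k
    using someI_ex[OF escape[OF that]] unfolding g_def by auto
  obtain x0 where x0: "x0 \<in> Field r" using ne by blast
  define G where "G u = (if u \<in> underS r a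
    then (if u \<in> j ` K then g (inv_into K j u) else x0) else undefined)" for u
  have "G \<in> ?FF" unfolding Func_def G_def using g x0 K(1) j(1) by auto
  then obtain y where y: "y \<in> Field r" "e y = G" using e by (metis imageE)
  then obtain k where k: "k \<in> K" "y \<in> underS r k"
    using cof unfolding cofinal_def underS_def by blast
  have "e y (j k) \<in> D k" using k(2) unfolding D_def by blast
  moreover have "e y (j k) = g k" using y k j unfolding G_def by auto
  ultimately show False using g(2) k(1) K(1) by auto
qed

lemma regularCard_if_small_funs_below:
  assumes r: "Card_order r" and ne: "Field r \<noteq> {}" and fb: "|funs_below r| \<le>o r"
  shows "regularCard r"
  unfolding regularCard_def
proof safe
  fix K assume K: "K \<subseteq> Field r" and "cofinal K r"
  have "|K| \<le>o r"
    using ordLeq_ordIso_trans[OF card_of_mono1[OF K] card_of_Field_ordIso[OF r]] .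
  moreover have "\<not> |K| <o r" using small_not_cofinal[OF r ne fb K] \<open>cofinal K r\<close> by blast
  ultimately show "|K| =o r" using ordLeq_iff_ordLess_or_ordIso by blast
qed

lemma small_subset_bounded:
  assumes r: "Card_order r" and inf: "infinite (Field r)" and fb: "|funs_below r| \<le>o r"
    and X: "X \<subseteq> Field r" "|X| <o r"
  shows "\<exists>k\<in>Field r. X \<subseteq> underS r k"
proof -
  interpret wo_rel r using Card_order_wo_rel[OF r] .
  have "Field r \<noteq> {}" using inf by auto
  then obtain k0 where k0: "k0 \<in> Field r" "\<forall>x\<in>X. k0 \<notin> underS x"
    using small_not_cofinal[OF r _ fb X] unfolding cofinal_def underS_def by blast
  obtain k where k: "k \<in> Field r" "k0 \<in> underS k"
    using infinite_Card_order_limit[OF r inf k0(1)] unfolding underS_def by blast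
  have "X \<subseteq> underS k"
    using k0 k X(1) under_if_not_underS underS_under_trans by blast
  thus ?thesis using k(1) by blast
qed

section \<open>The separation argument\<close>

lemma enumerate_family:
  assumes r: "Card_order r" and "|Cs| \<le>o r"
  shows "\<exists>c. Cs \<subseteq> c ` Field r \<and> c ` Field r \<subseteq> insert {} Cs"
proof (cases "Cs = {}")
  case True thus ?thesis by (intro exI[of _ "\<lambda>_. {}"]) auto
next
  case False
  then obtain c where "c ` Field r = Cs" using image_of_Field_if_card_le[OF r False assms(2)] by blast
  thus ?thesis by blast
qed

lemma small_traces:
  assumes r: "Card_order r" and c: "c ` Field r \<subseteq> insert {} Cs"
    and disj: "\<forall>B\<in>Bs. \<forall>C\<in>Cs. |B \<inter> C| <o r"
    and "B \<in> Bs" and a: "a \<in> Field r"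
  shows "|B \<inter> c a| <o r"
proof (cases "c a = {}")
  case True
  thus ?thesis using ordLeq_ordLess_trans[OF card_of_empty card_of_underS[OF r a]] by simp
next
  case False
  have "c a \<in> insert {} Cs" using c a by (meson image_subset_iff)
  thus ?thesis using False disj \<open>B \<in> Bs\<close> by simp
qed

lemma bounding_functions:
  assumes r: "Card_order r" and inf: "infinite (Field r)" and fb: "|funs_below r| \<le>o r"
    and Bs: "\<And>B. B \<in> Bs \<Longrightarrow> B \<subseteq> Field r"
    and small: "\<And>B a. B \<in> Bs \<Longrightarrow> a \<in> Field r \<Longrightarrow> |B \<inter> c a| <o r"
  shows "\<exists>f. \<forall>B\<in>Bs. f B \<in> Func (Field r) (Field r) \<and>
    (\<forall>a\<in>Field r. f B a \<in> Field r \<and> B \<inter> c a \<subseteq> underS r (f B a))"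
proof -
  define f where "f B a = (if a \<in> Field r
    then (SOME k. k \<in> Field r \<and> B \<inter> c a \<subseteq> underS r k) else undefined)" for B a
  have "f B a \<in> Field r \<and> B \<inter> c a \<subseteq> underS r (f B a)" if "B \<in> Bs" "a \<in> Field r" for B a
  proof -
    have "\<exists>k. k \<in> Field r \<and> B \<inter> c a \<subseteq> underS r k"
      using small_subset_bounded[OF r inf fb _ small[OF that]] Bs[OF that(1)] by blast
    from someI_ex[OF this] show ?thesis unfolding f_def using that(2) by simp
  qed
  thus ?thesis unfolding Func_def by (intro exI[of _ f]) (auto simp: f_def)
qed

lemma dominated_below_bounding_number:
  assumes b: "\<forall>F. unbounded r F \<longrightarrow> |Bs| <o |F|"
    and g: "g ` Bs \<subseteq> Func (Field r) (Field r)"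
  shows "\<exists>h\<in>Func (Field r) (Field r). \<forall>B\<in>Bs. le_star r (g B) h"
proof -
  have "\<not> |Bs| <o |g ` Bs|"
  proof
    assume "|Bs| <o |g ` Bs|"
    from not_ordLess_ordLeq[OF this] card_of_image[of g Bs] show False by blast
  qed
  hence "\<not> unbounded r (g ` Bs)" using b by blast
  thus ?thesis using g unfolding unbounded_def by blast
qed

lemma separable_from_dominating_bound:
  assumes r: "Card_order r" and st: "stable r"
    and Bs: "\<And>B. B \<in> Bs \<Longrightarrow> B \<subseteq> Field r"
    and c: "Cs \<subseteq> c ` Field r"
    and small: "\<And>B a. B \<in> Bs \<Longrightarrow> a \<in> Field r \<Longrightarrow> |B \<inter> c a| <o r"
    and f: "\<And>B a. B \<in> Bs \<Longrightarrow> a \<in> Field r \<Longrightarrow> f B a \<in> Field r \<and> B \<inter> c a \<subseteq> underS r (f B a)"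
    and h: "h \<in> Func (Field r) (Field r)" and dom: "\<And>B. B \<in> Bs \<Longrightarrow> le_star r (f B) h"
  shows "separable r Bs Cs"
proof -
  interpret wo_rel r using Card_order_wo_rel[OF r] .
  have hF: "h a \<in> Field r" if "a \<in> Field r" for a using h that unfolding Func_def by blast
  define S where "S = Field r - (\<Union>a\<in>Field r. c a - underS (h a))"
  have C_part: "|C \<inter> S| <o r" if "C \<in> Cs" for C
  proof -
    obtain a where a: "a \<in> Field r" "C = c a" using c \<open>C \<in> Cs\<close> by blast
    hence "C \<inter> S \<subseteq> underS (h a)" unfolding S_def by blast
    from ordLeq_ordLess_trans[OF card_of_mono1[OF this] card_of_underS[OF r hF[OF a(1)]]]
    show ?thesis .
  qed
  have B_part: "|B - S| <o r" if B: "B \<in> Bs" for B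
  proof -
    define E where "E = {a \<in> Field r. (h a, f B a) \<in> r \<and> h a \<noteq> f B a}"
    have "|E| <o r" using dom[OF B] unfolding le_star_def E_def .
    have below_h: "B \<inter> c a \<subseteq> underS (h a)" if a: "a \<in> Field r" "a \<notin> E" for a
    proof -
      have fB: "f B a \<in> Field r" "B \<inter> c a \<subseteq> underS (f B a)" using f[OF B a(1)] by auto
      have "h a \<notin> underS (f B a)" using a unfolding E_def underS_def by blast
      hence "(f B a, h a) \<in> r" using under_if_not_underS[OF fB(1) hF[OF a(1)]] by blast
      thus ?thesis using fB(2) underS_incr[OF TRANS ANTISYM] by blast
    qed
    have "B - S \<subseteq> (\<Union>a\<in>E. B \<inter> c a)"
    proof
      fix x assume x: "x \<in> B - S"
      then obtain a where a: "a \<in> Field r" "x \<in> c a" "x \<notin> underS (h a)"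
        using Bs[OF B] unfolding S_def by blast
      hence "a \<in> E" using below_h x by blast
      thus "x \<in> (\<Union>a\<in>E. B \<inter> c a)" using x a(2) by blast
    qed
    moreover have "|\<Union>a\<in>E. B \<inter> c a| <o r"
    proof (rule stable_UNION[OF st \<open>|E| <o r\<close>])
      fix a assume "a \<in> E"
      thus "|B \<inter> c a| <o r" using small[OF B] unfolding E_def by blast
    qed
    ultimately show ?thesis using ordLeq_ordLess_trans card_of_mono1 by blast
  qed
  have "S \<subseteq> Field r" unfolding S_def by blast
  thus ?thesis unfolding separable_def separates_def using B_part C_part by blast
qed

theorem mainTheorem10:
  fixes r :: "'a rel" and Bs Cs :: "'a set set"
  assumes "Card_order r" and "infinite (Field r)"
    and "|funs_below r| =o r"
    and "Bs \<subseteq> full_subsets r" and "Cs \<subseteq> full_subsets r"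
    and "|Cs| \<le>o r"
    and "\<forall>F. unbounded r F \<longrightarrow> |Bs| <o |F|"
    and "\<forall>B\<in>Bs. \<forall>C\<in>Cs. |B \<inter> C| <o r"
  shows "separable r Bs Cs"
proof -
  note r = assms(1) and inf = assms(2)
  have fb: "|funs_below r| \<le>o r" using assms(3) ordIso_iff_ordLeq by blast
  have "Field r \<noteq> {}" using inf by auto
  hence "regularCard r" using regularCard_if_small_funs_below[OF r _ fb] by blast
  hence st: "stable r" using regularCard_stable[OF r inf] by blast
  have BF: "B \<subseteq> Field r" if "B \<in> Bs" for B
    using that assms(4) unfolding full_subsets_def by blast
  obtain c where c: "Cs \<subseteq> c ` Field r" "c ` Field r \<subseteq> insert {} Cs"
    using enumerate_family[OF r assms(6)] by blast
  have small: "|B \<inter> c a| <o r" if "B \<in> Bs" "a \<in> Field r" for B a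
    using small_traces[OF r c(2) assms(8) that] .
  obtain f where f: "\<forall>B\<in>Bs. f B \<in> Func (Field r) (Field r) \<and>
      (\<forall>a\<in>Field r. f B a \<in> Field r \<and> B \<inter> c a \<subseteq> underS r (f B a))"
    using bounding_functions[where Bs = Bs and c = c, OF r inf fb BF small] by blast
  hence "f ` Bs \<subseteq> Func (Field r) (Field r)" by blast
  then obtain h where h: "h \<in> Func (Field r) (Field r)" "\<forall>B\<in>Bs. le_star r (f B) h"
    using dominated_below_bounding_number[OF assms(7)] by blast
  have "f B a \<in> Field r \<and> B \<inter> c a \<subseteq> underS r (f B a)" if "B \<in> Bs" "a \<in> Field r" for B a
    using f that by blast
  from separable_from_dominating_bound[OF r st BF c(1) small this h(1)] h(2)
  show ?thesis by blast
qed

end
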